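(* The $\mathcal R_b$-algebra homomorphism $\Phi_\infty:\mathcal K_\infty\to\operatorname{Fun}(W_\infty,\mathcal R_b)$, $f\mapsto(v\mapsto\Phi_v(f))$, is injective.
   Context: Grading $\deg x_i=\deg a_i=\deg b_i=1$, $\deg\beta=-1$; $R[[\cdots]]_{\mathrm{gr}}$ = finite sums of homogeneous formal power series. $\bar u=-u/(1+\beta u)$. $G\Gamma\subset\mathbb Q[\beta][[x_1,x_2,\dots]]_{\mathrm{gr}}$: series symmetric in the $x_i$ with $f(t,\bar t,x_3,\dots)=f(0,0,x_3,\dots)$. $\mathcal R_a=\bigcup_m\mathbb Q[\beta][[a_1,\dots,a_m]]_{\mathrm{gr}}$, $\mathcal R_b=\bigcup_m\mathbb Q[\beta][[b_1,\dots,b_m]]_{\mathrm{gr}}$, $\mathcal K_\infty=G\Gamma\otimes_{\mathbb Q[\beta]}\mathcal R_a\otimes_{\mathbb Q[\beta]}\mathcal R_b$. $W_\infty$: permutations $w$ of $\mathbb Z\setminus\{0\}$ moving finitely many elements with $w(-i)=-w(i)$. Put $b_{-j}:=\bar b_j$ (so $\bar b_{-j}=b_j$). For $v\in W_\infty$, $\Phi_v$ is the $\mathcal R_b$-algebra homomorphism $x_i\mapsto b_{v(i)}$ if $v(i)<0$, $x_i\mapsto0$ if $v(i)>0$, $a_i\mapsto\bar b_{v(i)}$. $\operatorname{Fun}(W_\infty,\mathcal R_b)$ has pointwise operations. *)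

theory Defs
  imports "HOL-Library.Poly_Mapping" "HOL-Computational_Algebra.Polynomial"
          "HOL-Combinatorics.Permutations"
begin

text \<open>Variables. Indices i >= 1 are the genuine variables x_i, a_i, b_i;
  the index 0 variable X 0 is only used as the auxiliary variable t in the
  definition of G Gamma.\<close>
datatype var = X nat | A nat | B nat

type_synonym mon = "var \<Rightarrow>\<^sub>0 nat"

type_synonym ser = "mon \<Rightarrow> rat poly"

definition beta :: "rat poly" where "beta = [:0, 1:]"

definition mdeg :: "mon \<Rightarrow> nat" where
  "mdeg m = (\<Sum>v\<in>Poly_Mapping.keys m. Poly_Mapping.lookup m v)"

definition ser_zero :: ser where "ser_zero = (\<lambda>_. 0)"
definition ser_one :: ser where "ser_one = (\<lambda>n. if n = 0 then 1 else 0)"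
definition ser_var :: "var \<Rightarrow> ser" where
  "ser_var w = (\<lambda>n. if n = Poly_Mapping.single w 1 then 1 else 0)"
definition ser_add :: "ser \<Rightarrow> ser \<Rightarrow> ser" where
  "ser_add f g = (\<lambda>n. f n + g n)"
definition ser_mul :: "ser \<Rightarrow> ser \<Rightarrow> ser" where
  "ser_mul f g = (\<lambda>n. \<Sum>(p, q)\<in>{(p, q). p + q = n}. f p * g q)"

primrec ser_pow :: "ser \<Rightarrow> nat \<Rightarrow> ser" where
  "ser_pow f 0 = ser_one"
| "ser_pow f (Suc k) = ser_mul f (ser_pow f k)"

definition mono_img :: "(var \<Rightarrow> ser) \<Rightarrow> mon \<Rightarrow> ser" where
  "mono_img \<sigma> m = Finite_Set.fold (\<lambda>v acc. ser_mul (ser_pow (\<sigma> v) (Poly_Mapping.lookup m v)) acc) ser_one (Poly_Mapping.keys m)"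

text \<open>Substitution homomorphism: every variable w is replaced by the series sigma w.
  (Used only where each coefficient of the result is a finite sum.)\<close>
definition subst :: "(var \<Rightarrow> ser) \<Rightarrow> ser \<Rightarrow> ser" where
  "subst \<sigma> f = (\<lambda>n. \<Sum>m\<in>{m. f m \<noteq> 0 \<and> mono_img \<sigma> m n \<noteq> 0}. f m * mono_img \<sigma> m n)"

text \<open>\<open>ubar w\<close> is the series  -u/(1+beta u) = sum_{k>=1} (-1)^k beta^(k-1) u^k  with u = w.\<close>
definition ubar :: "var \<Rightarrow> ser" where
  "ubar w = (\<lambda>n. if n \<noteq> 0 \<and> Poly_Mapping.keys n \<subseteq> {w}
                 then Polynomial.monom ((-1) ^ Poly_Mapping.lookup n w) (Poly_Mapping.lookup n w - 1) else 0)"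

section \<open>Grading: deg x = deg a = deg b = 1, deg beta = -1\<close>

definition homogeneous :: "int \<Rightarrow> ser \<Rightarrow> bool" where
  "homogeneous d f \<longleftrightarrow> (\<forall>m k. coeff (f m) k \<noteq> 0 \<longrightarrow> int (mdeg m) - int k = d)"

definition graded :: "ser \<Rightarrow> bool" where
  "graded f \<longleftrightarrow> (\<exists>D g. finite D \<and> (\<forall>d\<in>D. homogeneous d (g d)) \<and>
                        f = (\<lambda>n. \<Sum>d\<in>D. g d n))"

definition only_vars :: "var set \<Rightarrow> ser \<Rightarrow> bool" where
  "only_vars S f \<longleftrightarrow> (\<forall>m. f m \<noteq> 0 \<longrightarrow> Poly_Mapping.keys m \<subseteq> S)"

definition Ser_x :: "ser set" where
  "Ser_x = {f. graded f \<and> only_vars {X i | i. i \<ge> 1} f}"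

definition symmetric_x :: "ser \<Rightarrow> bool" where
  "symmetric_x f \<longleftrightarrow> (\<forall>\<pi>. \<pi> permutes {1..} \<longrightarrow>
      subst (\<lambda>w. case w of X i \<Rightarrow> ser_var (X (\<pi> i)) | _ \<Rightarrow> ser_var w) f = f)"

text \<open>G Gamma: symmetric series with f(t, tbar, x_3, ...) = f(0, 0, x_3, ...);
  the auxiliary variable t is X 0.\<close>
definition GGamma :: "ser set" where
  "GGamma = {f. f \<in> Ser_x \<and> symmetric_x f \<and>
     subst (\<lambda>w. if w = X 1 then ser_var (X 0) else if w = X 2 then ubar (X 0) else ser_var w) f
   = subst (\<lambda>w. if w = X 1 \<or> w = X 2 then ser_zero else ser_var w) f}"

definition R_a :: "ser set" where
  "R_a = {f. \<exists>M. graded f \<and> only_vars {A i | i. 1 \<le> i \<and> i \<le> M} f}"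

definition R_b :: "ser set" where
  "R_b = {f. \<exists>M. graded f \<and> only_vars {B i | i. 1 \<le> i \<and> i \<le> M} f}"

text \<open>K_infinity, realised inside the ring of power series in x, a, b as the set of
  finite sums of products f * g * h with f in G Gamma, g in R_a, h in R_b.\<close>
definition K_inf :: "ser set" where
  "K_inf = {F. \<exists>(n::nat) f g h. (\<forall>k<n. f k \<in> GGamma \<and> g k \<in> R_a \<and> h k \<in> R_b) \<and>
               F = (\<lambda>mm. \<Sum>k<n. ser_mul (ser_mul (f k) (g k)) (h k) mm)}"

definition W_inf :: "(int \<Rightarrow> int) set" where
  "W_inf = {v. bij_betw v (- {0}) (- {0}) \<and> finite {i. v i \<noteq> i} \<and> (\<forall>i. v (- i) = - v i)}"

text \<open>b_j for j a nonzero integer, with b_{-j} = bbar_j\<close>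
definition bvar :: "int \<Rightarrow> ser" where
  "bvar j = (if j > 0 then ser_var (B (nat j)) else ubar (B (nat (- j))))"

text \<open>bbar_j for j a nonzero integer, with bbar_{-j} = b_j\<close>
definition bbar :: "int \<Rightarrow> ser" where
  "bbar j = (if j > 0 then ubar (B (nat j)) else ser_var (B (nat (- j))))"

definition Phi_assign :: "(int \<Rightarrow> int) \<Rightarrow> var \<Rightarrow> ser" where
  "Phi_assign v w = (case w of
      X i \<Rightarrow> (if v (int i) < 0 then bvar (v (int i)) else ser_zero)
    | A i \<Rightarrow> bbar (v (int i))
    | B j \<Rightarrow> ser_var (B j))"

definition Phi :: "(int \<Rightarrow> int) \<Rightarrow> ser \<Rightarrow> ser" where
  "Phi v f = subst (Phi_assign v) f"

end

theory Submission
  imports Defs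
begin

text \<open>
  Suppose \<open>F \<noteq> G\<close> in \<open>K\<^sub>\<infinity>\<close> and let \<open>m\<close> be a monomial of least degree at which their
  coefficients differ. Only \<open>a\<^sub>i, b\<^sub>j\<close> with \<open>i, j \<le> N\<close> occur in \<open>F\<close> and \<open>G\<close>, and both are
  symmetric in the \<open>x\<^sub>i\<close>, so we may rename the \<open>x\<close>-indices of \<open>m\<close> into a block \<open>(T, 2T]\<close>
  with \<open>T > N\<close>. The signed permutation \<open>v\<close> that negates \<open>(T, 2T]\<close> and exchanges
  \<open>[1, N]\<close> with \<open>(2T, 2T + N]\<close> kills every other \<open>x\<^sub>i\<close> and sends each remaining
  variable to a series whose lowest term is \<open>\<plusminus>b\<^sub>j\<close>, with distinct \<open>j\<close> for distinct variables.
  Hence only divisors of \<open>m\<close> contribute to the coefficient of the image of \<open>m\<close> in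
  \<open>\<Phi>\<^sub>v(F) - \<Phi>\<^sub>v(G)\<close>, and by minimality that coefficient is \<open>\<plusminus>(F\<^sub>m - G\<^sub>m) \<noteq> 0\<close>.
\<close>

section \<open>Monomials\<close>

definition mon_divisors :: "mon \<Rightarrow> mon set" where
  "mon_divisors n = {p. \<exists>q. n = p + q}"

lemma mon_divisors_iff_lookup_le:
  "p \<in> mon_divisors n \<longleftrightarrow> (\<forall>v. Poly_Mapping.lookup p v \<le> Poly_Mapping.lookup n v)"
proof
  assume "\<forall>v. Poly_Mapping.lookup p v \<le> Poly_Mapping.lookup n v"
  then have "n = p + (n - p)"
    by (intro poly_mapping_eqI) (simp add: lookup_add lookup_minus)
  then show "p \<in> mon_divisors n"
    unfolding mon_divisors_def by blast
qed (auto simp: mon_divisors_def lookup_add)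

lemma mdeg_eq_sum:
  assumes "finite K" "Poly_Mapping.keys m \<subseteq> K"
  shows "mdeg m = (\<Sum>v\<in>K. Poly_Mapping.lookup m v)"
  unfolding mdeg_def using assms
  by (intro sum.mono_neutral_left) (auto simp: in_keys_iff)

lemma mdeg_add: "mdeg (a + b) = mdeg a + mdeg b"
proof -
  let ?K = "Poly_Mapping.keys a \<union> Poly_Mapping.keys b"
  have "mdeg (a + b) = (\<Sum>v\<in>?K. Poly_Mapping.lookup (a + b) v)"
    using keys_add[of a b] by (intro mdeg_eq_sum) auto
  also have "\<dots> = mdeg a + mdeg b"
    by (simp add: lookup_add sum.distrib mdeg_eq_sum[of ?K a] mdeg_eq_sum[of ?K b])
  finally show ?thesis .
qed

lemma mdeg_single: "mdeg (Poly_Mapping.single w k) = k"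
  by (simp add: mdeg_def)

lemma mdeg_eq_0_iff: "mdeg m = 0 \<longleftrightarrow> m = 0"
  by (auto simp: mdeg_def in_keys_iff intro!: poly_mapping_eqI)

lemma lookup_le_mdeg: "Poly_Mapping.lookup m v \<le> mdeg m"
  by (cases "v \<in> Poly_Mapping.keys m") (auto simp: mdeg_def in_keys_iff intro: member_le_sum)

lemma mdeg_less_if_proper_divisor:
  assumes "p \<in> mon_divisors n" "p \<noteq> n"
  shows "mdeg p < mdeg n"
proof -
  obtain q where "n = p + q" "q \<noteq> 0"
    using assms unfolding mon_divisors_def by auto
  then show ?thesis
    using mdeg_eq_0_iff[of q] by (simp add: mdeg_add)
qed

lemma finite_mon_divisors: "finite (mon_divisors n)"
proof -
  have "Poly_Mapping.lookup ` mon_divisors n \<subseteq>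
      {f. \<forall>v. (v \<in> Poly_Mapping.keys n \<longrightarrow> f v \<in> {..mdeg n}) \<and>
        (v \<notin> Poly_Mapping.keys n \<longrightarrow> f v = 0)}"
    by (auto simp: mon_divisors_iff_lookup_le in_keys_iff)
      (meson lookup_le_mdeg order_trans, metis le_zero_eq)
  then have "finite (Poly_Mapping.lookup ` mon_divisors n)"
    by (rule finite_subset) (intro finite_set_of_finite_funs; simp)
  then show ?thesis
    by (rule finite_imageD) (meson inj_onI poly_mapping.lookup_inject)
qed

lemma finite_mon_splittings: "finite {(p, q). p + q = (n :: mon)}"
proof -
  have "{(p, q). p + q = n} = (\<lambda>p. (p, n - p)) ` mon_divisors n"
    by (auto simp: mon_divisors_def image_iff)
  then show ?thesis
    by (simp add: finite_mon_divisors)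
qed

definition rename_mon :: "(var \<Rightarrow> var) \<Rightarrow> mon \<Rightarrow> mon" where
  "rename_mon \<tau> m = (\<Sum>w\<in>Poly_Mapping.keys m. Poly_Mapping.single (\<tau> w) (Poly_Mapping.lookup m w))"

lemma lookup_rename_mon:
  assumes "inj_on \<tau> (insert w (Poly_Mapping.keys m))"
  shows "Poly_Mapping.lookup (rename_mon \<tau> m) (\<tau> w) = Poly_Mapping.lookup m w"
proof -
  have "Poly_Mapping.lookup (rename_mon \<tau> m) (\<tau> w) =
      (\<Sum>u\<in>Poly_Mapping.keys m. if u = w then Poly_Mapping.lookup m u else 0)"
    unfolding rename_mon_def lookup_sum using assms
    by (intro sum.cong) (auto simp: lookup_single when_def inj_on_def)
  also have "\<dots> = Poly_Mapping.lookup m w"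
    by (simp add: in_keys_iff)
  finally show ?thesis .
qed

lemma mdeg_rename_mon: "mdeg (rename_mon \<tau> m) = mdeg m"
  unfolding rename_mon_def mdeg_def[of m]
  by (subst sum_comp_morphism[of mdeg, symmetric, unfolded o_def])
     (simp_all add: mdeg_add mdeg_eq_0_iff mdeg_single)

context
  fixes \<rho> :: "var \<Rightarrow> var"
  assumes involution: "\<And>w. \<rho> (\<rho> w) = w"
begin

lemma lookup_rename_mon_involution:
  "Poly_Mapping.lookup (rename_mon \<rho> m) w = Poly_Mapping.lookup m (\<rho> w)"
  using lookup_rename_mon[of \<rho> "\<rho> w" m] inj_on_inverseI[of _ \<rho> \<rho>] involution by metis

lemma rename_mon_add: "rename_mon \<rho> (a + b) = rename_mon \<rho> a + rename_mon \<rho> b"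
  by (intro poly_mapping_eqI) (simp add: lookup_rename_mon_involution lookup_add)

lemma rename_mon_rename_mon: "rename_mon \<rho> (rename_mon \<rho> m) = m"
  by (intro poly_mapping_eqI) (simp add: lookup_rename_mon_involution involution)

lemma rename_mon_eq_self:
  assumes "\<And>w. w \<in> Poly_Mapping.keys m \<Longrightarrow> \<rho> w = w"
  shows "rename_mon \<rho> m = m"
proof (intro poly_mapping_eqI)
  fix w
  have "Poly_Mapping.lookup m (\<rho> w) = Poly_Mapping.lookup m w"
    using assms involution by (metis in_keys_iff)
  then show "Poly_Mapping.lookup (rename_mon \<rho> m) w = Poly_Mapping.lookup m w"
    by (simp add: lookup_rename_mon_involution)
qed

end

section \<open>Products of series and their lowest terms\<close>

lemma ser_mul_ser_mul_eq_sum_triples: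
  "ser_mul f (ser_mul g h) n = (\<Sum>(p, q, r)\<in>{(p, q, r). p + q + r = n}. f p * g q * h r)"
proof -
  have "ser_mul f (ser_mul g h) n =
      (\<Sum>x\<in>{(p, t). p + t = n}. \<Sum>y\<in>{(q, r). q + r = snd x}. f (fst x) * g (fst y) * h (snd y))"
    by (simp add: ser_mul_def sum_distrib_left case_prod_unfold mult.assoc)
  also have "\<dots> = (\<Sum>(x, y)\<in>Sigma {(p, t). p + t = n} (\<lambda>x. {(q, r). q + r = snd x}).
      f (fst x) * g (fst y) * h (snd y))"
    by (rule sum.Sigma) (simp_all add: finite_mon_splittings)
  also have "\<dots> = (\<Sum>(p, q, r)\<in>{(p, q, r). p + q + r = n}. f p * g q * h r)"
    by (rule sum.reindex_bij_witness[where i = "\<lambda>(p, q, r). ((p, q + r), (q, r))"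
          and j = "\<lambda>(x, y). (fst x, fst y, snd y)"]) (clarsimp simp: add.assoc)+
  finally show ?thesis .
qed

lemma ser_mul_left_commute: "ser_mul f (ser_mul g h) = ser_mul g (ser_mul f h)"
proof
  fix n
  show "ser_mul f (ser_mul g h) n = ser_mul g (ser_mul f h) n"
    unfolding ser_mul_ser_mul_eq_sum_triples
    by (rule sum.reindex_bij_witness[where i = "\<lambda>(p, q, r). (q, p, r)" and j = "\<lambda>(p, q, r). (q, p, r)"])
       (clarsimp simp: ac_simps)+
qed

lemma comp_fun_commute_ser_mul: "comp_fun_commute_on UNIV (\<lambda>v. ser_mul (h v))"
  by unfold_locales (simp add: fun_eq_iff ser_mul_left_commute)

lemma ser_mul_zero_left: "ser_mul ser_zero f = ser_zero"
  by (simp add: ser_mul_def ser_zero_def fun_eq_iff)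

lemma mono_img_eq_zero:
  assumes "w \<in> Poly_Mapping.keys m" "\<sigma> w = ser_zero"
  shows "mono_img \<sigma> m = ser_zero"
proof -
  obtain k where "Poly_Mapping.lookup m w = Suc k"
    using assms(1) by (metis in_keys_iff not0_implies_Suc)
  then show ?thesis
    unfolding mono_img_def
    using comp_fun_commute_on.fold_rec[OF comp_fun_commute_ser_mul subset_UNIV finite_keys assms(1),
        of "\<lambda>v. ser_pow (\<sigma> v) (Poly_Mapping.lookup m v)"]
    by (simp add: assms(2) ser_mul_zero_left)
qed

lemma ser_mul_rename_invariant:
  assumes "\<And>a b. \<phi> (a + b) = \<phi> a + \<phi> b" "\<And>a. \<phi> (\<phi> a) = a"
    and "\<And>p. f (\<phi> p) = f p" "\<And>q. g (\<phi> q) = g q"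
  shows "ser_mul f g (\<phi> n) = ser_mul f g n"
proof -
  have sum_iff: "\<phi> p + \<phi> q = m \<longleftrightarrow> p + q = \<phi> m" for p q m
    by (metis assms(1,2))
  show ?thesis
    unfolding ser_mul_def
    by (rule sum.reindex_bij_witness[where i = "\<lambda>(p, q). (\<phi> p, \<phi> q)" and j = "\<lambda>(p, q). (\<phi> p, \<phi> q)"])
       (auto simp: assms(2-4) sum_iff)
qed

definition add_submonoid :: "mon set \<Rightarrow> bool" where
  "add_submonoid C \<longleftrightarrow> 0 \<in> C \<and> (\<forall>a\<in>C. \<forall>b\<in>C. a + b \<in> C)"

text \<open>With \<open>C = {0}\<close> this says that \<open>f\<close> is the single term \<open>c x\<^sup>e\<close>; with \<open>C = UNIV\<close>,
  that every monomial of \<open>f\<close> is a multiple of \<open>x\<^sup>e\<close>, the one of \<open>x\<^sup>e\<close> itself being \<open>c\<close>.\<close>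

definition has_lowest_term :: "mon set \<Rightarrow> ser \<Rightarrow> mon \<Rightarrow> rat poly \<Rightarrow> bool" where
  "has_lowest_term C f e c \<longleftrightarrow> (\<forall>n. f n \<noteq> 0 \<longrightarrow> (\<exists>d\<in>C. n = e + d)) \<and> f e = c"

lemma add_submonoid_UNIV: "add_submonoid UNIV"
  by (simp add: add_submonoid_def)

lemma add_submonoid_zero: "add_submonoid {0}"
  by (simp add: add_submonoid_def)

lemma has_lowest_term_ser_one: "add_submonoid C \<Longrightarrow> has_lowest_term C ser_one 0 1"
  by (auto simp: has_lowest_term_def ser_one_def add_submonoid_def)

lemma has_lowest_term_ser_var:
  "add_submonoid C \<Longrightarrow> has_lowest_term C (ser_var w) (Poly_Mapping.single w 1) 1"
  by (auto simp: has_lowest_term_def ser_var_def add_submonoid_def)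

lemma has_lowest_term_ubar: "has_lowest_term UNIV (ubar w) (Poly_Mapping.single w 1) (- 1)"
  unfolding has_lowest_term_def
proof (intro conjI allI impI)
  fix n
  assume "ubar w n \<noteq> 0"
  then have "n \<noteq> 0" and keys: "Poly_Mapping.keys n \<subseteq> {w}"
    by (auto simp: ubar_def split: if_splits)
  have "n = Poly_Mapping.single w (Poly_Mapping.lookup n w)"
    using keys by (intro poly_mapping_eqI) (auto simp: lookup_single when_def in_keys_iff)
  moreover from this \<open>n \<noteq> 0\<close> have "Poly_Mapping.lookup n w \<noteq> 0"
    by (metis single_zero)
  ultimately obtain k where "n = Poly_Mapping.single w (Suc k)"
    by (metis not0_implies_Suc)
  then show "\<exists>d\<in>UNIV. n = Poly_Mapping.single w 1 + d"
    by (metis UNIV_I plus_1_eq_Suc single_add)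
next
  have "Poly_Mapping.single w (1 :: nat) \<noteq> 0"
    by (metis lookup_single_eq lookup_zero one_neq_zero)
  then show "ubar w (Poly_Mapping.single w 1) = - 1"
    by (simp add: ubar_def monom_0 one_pCons)
qed

lemma has_lowest_term_ser_mul:
  assumes C: "add_submonoid C"
    and f: "has_lowest_term C f e1 c1" and g: "has_lowest_term C g e2 c2"
  shows "has_lowest_term C (ser_mul f g) (e1 + e2) (c1 * c2)"
  unfolding has_lowest_term_def
proof (intro conjI allI impI)
  fix n
  assume "ser_mul f g n \<noteq> 0"
  then obtain p q where "n = p + q" "f p \<noteq> 0" "g q \<noteq> 0"
    unfolding ser_mul_def by (auto elim!: sum.not_neutral_contains_not_neutral)
  moreover obtain d1 d2 where "d1 \<in> C" "p = e1 + d1" "d2 \<in> C" "q = e2 + d2"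
    using f g \<open>f p \<noteq> 0\<close> \<open>g q \<noteq> 0\<close> unfolding has_lowest_term_def by blast
  ultimately show "\<exists>d\<in>C. n = e1 + e2 + d"
    using C unfolding add_submonoid_def by (intro bexI[of _ "d1 + d2"]) (simp_all add: ac_simps)
next
  have off_diagonal: "f p * g q = 0" if "p + q = e1 + e2" "(p, q) \<noteq> (e1, e2)" for p q
  proof (rule ccontr)
    assume "f p * g q \<noteq> 0"
    then obtain d1 d2 where d: "p = e1 + d1" "q = e2 + d2"
      using f g unfolding has_lowest_term_def by (metis mult_zero_left mult_zero_right)
    with that(1) have "(e1 + e2) + (d1 + d2) = (e1 + e2) + 0"
      by (simp add: ac_simps)
    then have "d1 + d2 = 0"
      by (rule add_left_imp_eq)
    then have "d1 = 0 \<and> d2 = 0"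
      by (metis add_is_0 lookup_add lookup_zero poly_mapping_eqI)
    with d that(2) show False
      by simp
  qed
  then have "ser_mul f g (e1 + e2) = (\<Sum>(p, q)\<in>{(e1, e2)}. f p * g q)"
    unfolding ser_mul_def using off_diagonal
    by (intro sum.mono_neutral_right finite_mon_splittings) fastforce+
  then show "ser_mul f g (e1 + e2) = c1 * c2"
    using f g by (simp add: has_lowest_term_def)
qed

lemma has_lowest_term_ser_pow:
  assumes "add_submonoid C" "has_lowest_term C f (Poly_Mapping.single w 1) c"
  shows "has_lowest_term C (ser_pow f k) (Poly_Mapping.single w k) (c ^ k)"
proof (induction k)
  case 0
  then show ?case
    using has_lowest_term_ser_one[OF assms(1)] by simp
next
  case (Suc k)
  then show ?case
    using has_lowest_term_ser_mul[OF assms Suc]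
    by (simp add: single_add[symmetric] plus_1_eq_Suc)
qed

lemma has_lowest_term_fold_ser_mul:
  assumes "add_submonoid C" "finite V" "\<And>v. v \<in> V \<Longrightarrow> has_lowest_term C (h v) (e v) (c v)"
  shows "has_lowest_term C (Finite_Set.fold (\<lambda>v. ser_mul (h v)) ser_one V) (\<Sum>v\<in>V. e v) (\<Prod>v\<in>V. c v)"
  using assms(2,3)
proof (induction V rule: finite_induct)
  case empty
  then show ?case
    using has_lowest_term_ser_one[OF assms(1)] by simp
next
  case (insert v V)
  then show ?case
    by (simp add: comp_fun_commute_on.fold_insert[OF comp_fun_commute_ser_mul]
        has_lowest_term_ser_mul[OF assms(1)])
qed

lemma mono_img_has_lowest_term:
  assumes "add_submonoid C"
    and "\<And>w. w \<in> Poly_Mapping.keys m \<Longrightarrow>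
      has_lowest_term C (\<sigma> w) (Poly_Mapping.single (\<tau> w) 1) (c w)"
  shows "has_lowest_term C (mono_img \<sigma> m) (rename_mon \<tau> m)
    (\<Prod>w\<in>Poly_Mapping.keys m. c w ^ Poly_Mapping.lookup m w)"
  unfolding mono_img_def rename_mon_def
  by (rule has_lowest_term_fold_ser_mul) (auto intro: assms has_lowest_term_ser_pow)

section \<open>Symmetry and support of elements of \<open>K\<^sub>\<infinity>\<close>\<close>

lemma mono_img_ser_var_rename:
  "mono_img (\<lambda>w. ser_var (\<tau> w)) m n = (if n = rename_mon \<tau> m then 1 else 0)"
proof -
  have "has_lowest_term {0} (mono_img (\<lambda>w. ser_var (\<tau> w)) m) (rename_mon \<tau> m)
      (\<Prod>w\<in>Poly_Mapping.keys m. 1 ^ Poly_Mapping.lookup m w)"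
    by (rule mono_img_has_lowest_term[OF add_submonoid_zero has_lowest_term_ser_var[OF add_submonoid_zero]])
  then show ?thesis
    unfolding has_lowest_term_def by auto
qed

lemma subst_ser_var_involution:
  assumes "\<And>w. \<rho> (\<rho> w) = w"
  shows "subst (\<lambda>w. ser_var (\<rho> w)) f n = f (rename_mon \<rho> n)"
proof -
  have "{m. f m \<noteq> 0 \<and> mono_img (\<lambda>w. ser_var (\<rho> w)) m n \<noteq> 0} =
      (if f (rename_mon \<rho> n) = 0 then {} else {rename_mon \<rho> n})"
    by (auto simp: mono_img_ser_var_rename rename_mon_rename_mon[OF assms])
  then show ?thesis
    by (simp add: subst_def mono_img_ser_var_rename rename_mon_rename_mon[OF assms])
qed

definition rename_x :: "(nat \<Rightarrow> nat) \<Rightarrow> var \<Rightarrow> var" where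
  "rename_x \<pi> w = (case w of X i \<Rightarrow> X (\<pi> i) | _ \<Rightarrow> w)"

lemma rename_x_involution: "(\<And>i. \<pi> (\<pi> i) = i) \<Longrightarrow> rename_x \<pi> (rename_x \<pi> w) = w"
  by (cases w) (simp_all add: rename_x_def)

lemma symmetric_x_coeff_rename_x:
  assumes "symmetric_x f" "\<pi> permutes {1..}" "\<And>i. \<pi> (\<pi> i) = i"
  shows "f (rename_mon (rename_x \<pi>) n) = f n"
proof -
  have "subst (\<lambda>w. case w of X i \<Rightarrow> ser_var (X (\<pi> i)) | _ \<Rightarrow> ser_var w) f = f"
    using assms(1,2) unfolding symmetric_x_def by blast
  moreover have "(\<lambda>w. case w of X i \<Rightarrow> ser_var (X (\<pi> i)) | _ \<Rightarrow> ser_var w) =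
      (\<lambda>w. ser_var (rename_x \<pi> w))"
    by (auto simp: rename_x_def fun_eq_iff split: var.split)
  ultimately have "subst (\<lambda>w. ser_var (rename_x \<pi> w)) f n = f n"
    by simp
  then show ?thesis
    by (simp add: subst_ser_var_involution[OF rename_x_involution[OF assms(3)]])
qed

lemma only_vars_mono: "only_vars S f \<Longrightarrow> S \<subseteq> T \<Longrightarrow> only_vars T f"
  unfolding only_vars_def by blast

lemma only_vars_ser_mul:
  assumes "only_vars S f" "only_vars S g"
  shows "only_vars S (ser_mul f g)"
  unfolding only_vars_def
proof (intro allI impI)
  fix n
  assume "ser_mul f g n \<noteq> 0"
  then obtain p q where "n = p + q" "f p \<noteq> 0" "g q \<noteq> 0"
    unfolding ser_mul_def by (auto elim!: sum.not_neutral_contains_not_neutral)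
  then show "Poly_Mapping.keys n \<subseteq> S"
    using assms keys_add[of p q] unfolding only_vars_def by blast
qed

lemma only_vars_sum:
  "(\<And>k. k \<in> K \<Longrightarrow> only_vars S (f k)) \<Longrightarrow> only_vars S (\<lambda>n. \<Sum>k\<in>K. f k n)"
  unfolding only_vars_def by (meson sum.not_neutral_contains_not_neutral)

lemma only_vars_coeff_rename_x:
  assumes "only_vars S g" "\<And>i. X i \<notin> S" "\<And>i. \<pi> (\<pi> i) = i"
  shows "g (rename_mon (rename_x \<pi>) m) = g m"
proof -
  let ?\<rho> = "rename_x \<pi>"
  have fixed: "rename_mon ?\<rho> m' = m'" if "g m' \<noteq> 0" for m'
  proof (rule rename_mon_eq_self)
    fix w
    assume "w \<in> Poly_Mapping.keys m'"
    then have "w \<in> S"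
      using assms(1) that unfolding only_vars_def by blast
    then show "?\<rho> w = w"
      using assms(2) by (cases w) (auto simp: rename_x_def)
  qed (rule rename_x_involution[OF assms(3)])
  show ?thesis
    using fixed[of m] fixed[of "rename_mon ?\<rho> m"]
      rename_mon_rename_mon[of ?\<rho> m, OF rename_x_involution[OF assms(3)]] by metis
qed

definition bounded_vars :: "nat \<Rightarrow> var set" where
  "bounded_vars N = {X i | i. 1 \<le> i} \<union> {A i | i. 1 \<le> i \<and> i \<le> N} \<union> {B j | j. 1 \<le> j \<and> j \<le> N}"

lemma bounded_vars_mono: "M \<le> N \<Longrightarrow> bounded_vars M \<subseteq> bounded_vars N"
  unfolding bounded_vars_def by auto

lemma K_inf_only_vars:
  assumes "F \<in> K_inf"
  obtains N where "only_vars (bounded_vars N) F"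
proof -
  obtain n :: nat and f g h :: "nat \<Rightarrow> ser"
    where fgh: "\<forall>k<n. f k \<in> GGamma \<and> g k \<in> R_a \<and> h k \<in> R_b"
    and F: "F = (\<lambda>mm. \<Sum>k<n. ser_mul (ser_mul (f k) (g k)) (h k) mm)"
    using assms unfolding K_inf_def by blast
  have "\<exists>M. only_vars (bounded_vars M) (g k) \<and> only_vars (bounded_vars M) (h k)" if "k < n" for k
  proof -
    obtain Ma Mb where "only_vars {A i | i. 1 \<le> i \<and> i \<le> Ma} (g k)"
        "only_vars {B i | i. 1 \<le> i \<and> i \<le> Mb} (h k)"
      using fgh[rule_format, OF \<open>k < n\<close>] unfolding R_a_def R_b_def by blast
    moreover have "{A i | i. 1 \<le> i \<and> i \<le> Ma} \<subseteq> bounded_vars (Ma + Mb)"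
        "{B i | i. 1 \<le> i \<and> i \<le> Mb} \<subseteq> bounded_vars (Ma + Mb)"
      by (auto simp: bounded_vars_def)
    ultimately show ?thesis
      using only_vars_mono by blast
  qed
  then obtain M where M: "\<And>k. k < n \<Longrightarrow>
      only_vars (bounded_vars (M k)) (g k) \<and> only_vars (bounded_vars (M k)) (h k)"
    by metis
  have "only_vars (bounded_vars (\<Sum>k<n. M k)) F"
    unfolding F
  proof (intro only_vars_sum only_vars_ser_mul)
    fix k
    assume k: "k \<in> {..<n}"
    then have "bounded_vars (M k) \<subseteq> bounded_vars (\<Sum>k<n. M k)"
      by (intro bounded_vars_mono member_le_sum) auto
    then show "only_vars (bounded_vars (\<Sum>k<n. M k)) (g k)" "only_vars (bounded_vars (\<Sum>k<n. M k)) (h k)"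
      using M k only_vars_mono by blast+
    show "only_vars (bounded_vars (\<Sum>k<n. M k)) (f k)"
      using fgh k unfolding GGamma_def Ser_x_def
      by (auto elim!: only_vars_mono simp: bounded_vars_def)
  qed
  then show ?thesis
    by (rule that)
qed

lemma K_inf_coeff_rename_x:
  assumes "F \<in> K_inf" "\<pi> permutes {1..}" "\<And>i. \<pi> (\<pi> i) = i"
  shows "F (rename_mon (rename_x \<pi>) m) = F m"
proof -
  obtain n :: nat and f g h :: "nat \<Rightarrow> ser"
    where fgh: "\<forall>k<n. f k \<in> GGamma \<and> g k \<in> R_a \<and> h k \<in> R_b"
    and F: "F = (\<lambda>mm. \<Sum>k<n. ser_mul (ser_mul (f k) (g k)) (h k) mm)"
    using assms unfolding K_inf_def by blast
  let ?\<phi> = "rename_mon (rename_x \<pi>)"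
  note involution = rename_x_involution[OF assms(3)]
  have add: "?\<phi> (a + b) = ?\<phi> a + ?\<phi> b" and inv: "?\<phi> (?\<phi> a) = a" for a b
    using rename_mon_add[OF involution] rename_mon_rename_mon[OF involution] by blast+
  have "ser_mul (ser_mul (f k) (g k)) (h k) (?\<phi> m) = ser_mul (ser_mul (f k) (g k)) (h k) m"
    if "k < n" for k
  proof -
    obtain Ma Mb where "only_vars {A i | i. 1 \<le> i \<and> i \<le> Ma} (g k)"
        "only_vars {B i | i. 1 \<le> i \<and> i \<le> Mb} (h k)"
      using fgh[rule_format, OF \<open>k < n\<close>] unfolding R_a_def R_b_def by blast
    then have "g k (?\<phi> p) = g k p" "h k (?\<phi> p) = h k p" for p
      by (auto intro!: only_vars_coeff_rename_x assms(3))
    moreover have "f k (?\<phi> p) = f k p" for p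
      using fgh[rule_format, OF \<open>k < n\<close>] assms(2,3) unfolding GGamma_def
      by (blast intro: symmetric_x_coeff_rename_x)
    ultimately show ?thesis
      by (intro ser_mul_rename_invariant[OF add inv]) simp_all
  qed
  then show ?thesis
    unfolding F by simp
qed

section \<open>A test element of \<open>W\<^sub>\<infinity>\<close>\<close>

definition swap_blocks :: "nat \<Rightarrow> nat \<Rightarrow> nat" where
  "swap_blocks T i = (if 1 \<le> i \<and> i \<le> T then i + T else if T < i \<and> i \<le> 2 * T then i - T else i)"

lemma swap_blocks_involution: "swap_blocks T (swap_blocks T i) = i"
  unfolding swap_blocks_def by auto

lemma swap_blocks_permutes: "swap_blocks T permutes {1..}"
  unfolding permutes_def
proof (intro conjI allI impI)
  fix i :: nat
  assume "i \<notin> {1..}"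
  then show "swap_blocks T i = i"
    by (simp add: swap_blocks_def)
next
  fix j
  show "\<exists>!i. swap_blocks T i = j"
    by (metis swap_blocks_involution)
qed

lemma involution_in_W_inf:
  assumes "\<And>j. v (v j) = j" "\<And>j. v (- j) = - v j" "finite {j. v j \<noteq> j}"
  shows "v \<in> W_inf"
proof -
  have "v 0 = 0"
    using assms(2)[of 0] by simp
  have image: "v ` (- {0}) = - {0}"
  proof (intro equalityI subsetI)
    fix j
    assume "j \<in> v ` (- {0})"
    then show "j \<in> - {0}"
      using \<open>v 0 = 0\<close> assms(1) by (metis ComplD ComplI imageE singletonD singletonI)
  next
    fix j :: int
    assume "j \<in> - {0}"
    then have "v j \<in> - {0}" and "j = v (v j)"
      using \<open>v 0 = 0\<close> assms(1) by (metis ComplD ComplI singletonD singletonI)+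
    then show "j \<in> v ` (- {0})"
      by blast
  qed
  have "bij v"
    using assms(1) by (rule involuntory_imp_bij)
  then have "bij_betw v (- {0}) (- {0})"
    using subset_UNIV image by (rule bij_betw_subset)
  then show ?thesis
    unfolding W_inf_def using assms(2,3) by blast
qed

definition test_perm :: "nat \<Rightarrow> nat \<Rightarrow> int \<Rightarrow> int" where
  "test_perm T N j =
     (if int T < \<bar>j\<bar> \<and> \<bar>j\<bar> \<le> 2 * int T then - j
      else if 0 < \<bar>j\<bar> \<and> \<bar>j\<bar> \<le> int N then j + sgn j * (2 * int T)
      else if 2 * int T < \<bar>j\<bar> \<and> \<bar>j\<bar> \<le> 2 * int T + int N then j - sgn j * (2 * int T)
      else j)"

lemma test_perm_in_W_inf:
  assumes "N < T"
  shows "test_perm T N \<in> W_inf"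
proof (rule involution_in_W_inf)
  show "test_perm T N (test_perm T N j) = j" for j
    using assms by (cases "j < 0"; cases "j = 0") (simp_all add: test_perm_def abs_if sgn_if)
  show "test_perm T N (- j) = - test_perm T N j" for j
    by (cases "j < 0"; cases "j = 0") (simp_all add: test_perm_def abs_if sgn_if)
  have "{j. test_perm T N j \<noteq> j} \<subseteq> {- (2 * int T + int N)..2 * int T + int N}"
    by (auto simp: test_perm_def)
  then show "finite {j. test_perm T N j \<noteq> j}"
    by (rule finite_subset) simp
qed

text \<open>For \<open>v = test_perm T N\<close> the assignment \<open>Phi_assign v\<close> sends \<open>X i\<close> (\<open>T < i \<le> 2T\<close>) to
  \<open>ubar (B i)\<close>, \<open>A i\<close> (\<open>i \<le> N\<close>) to \<open>ubar (B (2T + i))\<close>, \<open>B j\<close> to \<open>ser_var (B j)\<close> and every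
  other \<open>X i\<close> to \<open>ser_zero\<close>; \<open>test_target T w\<close> is the variable of the lowest term of the image
  of \<open>w\<close>.\<close>

definition test_vars :: "nat \<Rightarrow> nat \<Rightarrow> var set" where
  "test_vars T N = {X i | i. T < i \<and> i \<le> 2 * T} \<union> {A i | i. 1 \<le> i \<and> i \<le> N} \<union> {B j | j. 1 \<le> j \<and> j \<le> N}"

definition test_target :: "nat \<Rightarrow> var \<Rightarrow> var" where
  "test_target T w = (case w of X i \<Rightarrow> B i | A i \<Rightarrow> B (2 * T + i) | B j \<Rightarrow> B j)"

lemma inj_on_test_target: "N < T \<Longrightarrow> inj_on (test_target T) (test_vars T N)"
  unfolding inj_on_def test_vars_def test_target_def by auto

lemma Phi_assign_test_perm_has_lowest_term:
  assumes "N < T" "w \<in> test_vars T N"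
  shows "\<exists>c. c \<noteq> 0 \<and>
    has_lowest_term UNIV (Phi_assign (test_perm T N) w) (Poly_Mapping.single (test_target T w) 1) c"
proof -
  consider (x) i where "w = X i" "T < i" "i \<le> 2 * T"
    | (a) i where "w = A i" "1 \<le> i" "i \<le> N"
    | (b) j where "w = B j"
    using assms(2) unfolding test_vars_def by blast
  then show ?thesis
  proof cases
    case x
    then have "Phi_assign (test_perm T N) w = ubar (B i)"
      by (simp add: Phi_assign_def test_perm_def bvar_def)
    then show ?thesis
      using x has_lowest_term_ubar by (intro exI[of _ "- 1"]) (simp add: test_target_def)
  next
    case a
    then have "test_perm T N (int i) = int (2 * T + i)"
      using assms(1) by (simp add: test_perm_def)
    then have "Phi_assign (test_perm T N) w = bbar (int (2 * T + i))"
      using a by (simp only: Phi_assign_def var.case)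
    also have "\<dots> = ubar (B (2 * T + i))"
      using a by (simp only: bbar_def nat_int) simp
    finally have "Phi_assign (test_perm T N) w = ubar (B (2 * T + i))" .
    then show ?thesis
      using a has_lowest_term_ubar by (intro exI[of _ "- 1"]) (simp add: test_target_def)
  next
    case b
    then show ?thesis
      using has_lowest_term_ser_var[OF add_submonoid_UNIV]
      by (intro exI[of _ 1]) (simp add: Phi_assign_def test_target_def)
  qed
qed

lemma Phi_assign_test_perm_eq_zero:
  assumes "w \<in> bounded_vars N - test_vars T N"
  shows "Phi_assign (test_perm T N) w = ser_zero"
  using assms by (auto simp: bounded_vars_def test_vars_def Phi_assign_def test_perm_def)

lemma keys_rename_swap_blocks:
  assumes "Poly_Mapping.keys m \<subseteq> bounded_vars N" "\<And>i. X i \<in> Poly_Mapping.keys m \<Longrightarrow> i \<le> T"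
  shows "Poly_Mapping.keys (rename_mon (rename_x (swap_blocks T)) m) \<subseteq> test_vars T N"
proof
  fix w
  assume "w \<in> Poly_Mapping.keys (rename_mon (rename_x (swap_blocks T)) m)"
  then have w: "rename_x (swap_blocks T) w \<in> Poly_Mapping.keys m"
    by (simp add: in_keys_iff lookup_rename_mon_involution rename_x_involution swap_blocks_involution)
  show "w \<in> test_vars T N"
  proof (cases w)
    case (X i)
    define k where "k = swap_blocks T i"
    have "X k \<in> Poly_Mapping.keys m"
      using w X by (simp add: rename_x_def k_def)
    then have "1 \<le> k" "k \<le> T"
      using assms unfolding bounded_vars_def by auto
    have "i = swap_blocks T k"
      by (simp add: k_def swap_blocks_involution)
    also have "\<dots> = k + T"
      using \<open>1 \<le> k\<close> \<open>k \<le> T\<close> by (simp add: swap_blocks_def)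
    finally show ?thesis
      using X \<open>1 \<le> k\<close> \<open>k \<le> T\<close> by (auto simp: test_vars_def)
  next
    case (A i)
    then show ?thesis
      using w assms(1) by (auto simp: rename_x_def bounded_vars_def test_vars_def)
  next
    case (B j)
    then show ?thesis
      using w assms(1) by (auto simp: rename_x_def bounded_vars_def test_vars_def)
  qed
qed

section \<open>Injectivity\<close>

lemma mono_img_nonzero_imp_mon_divisor:
  assumes "inj_on \<tau> V" "Poly_Mapping.keys m \<subseteq> V" "Poly_Mapping.keys m1 \<subseteq> V"
    and "\<And>w. w \<in> V \<Longrightarrow> has_lowest_term UNIV (\<sigma> w) (Poly_Mapping.single (\<tau> w) 1) (c w)"
    and "mono_img \<sigma> m (rename_mon \<tau> m1) \<noteq> 0"
  shows "m \<in> mon_divisors m1"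
proof -
  have "has_lowest_term UNIV (mono_img \<sigma> m) (rename_mon \<tau> m)
      (\<Prod>w\<in>Poly_Mapping.keys m. c w ^ Poly_Mapping.lookup m w)"
    using assms(2) by (intro mono_img_has_lowest_term add_submonoid_UNIV assms(4)) auto
  then obtain d where d: "rename_mon \<tau> m1 = rename_mon \<tau> m + d"
    using assms(5) unfolding has_lowest_term_def by blast
  have "Poly_Mapping.lookup m w \<le> Poly_Mapping.lookup m1 w" for w
  proof (cases "w \<in> V")
    case True
    then have "Poly_Mapping.lookup m w = Poly_Mapping.lookup (rename_mon \<tau> m) (\<tau> w)"
      using assms(2) by (intro lookup_rename_mon[symmetric] inj_on_subset[OF assms(1)]) auto
    also have "\<dots> \<le> Poly_Mapping.lookup (rename_mon \<tau> m1) (\<tau> w)"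
      unfolding d by (simp add: lookup_add)
    also have "\<dots> = Poly_Mapping.lookup m1 w"
      using True assms(3) by (intro lookup_rename_mon inj_on_subset[OF assms(1)]) auto
    finally show ?thesis .
  next
    case False
    then have "Poly_Mapping.lookup m w = 0"
      using assms(2) by (meson in_keys_iff subsetD)
    then show ?thesis
      by simp
  qed
  then show ?thesis
    by (simp add: mon_divisors_iff_lookup_le)
qed

lemma subst_coeff_eq_sum_mon_divisors:
  assumes "\<And>m. H m \<noteq> 0 \<Longrightarrow> Poly_Mapping.keys m \<subseteq> S"
    and "\<And>w. w \<in> S - V \<Longrightarrow> \<sigma> w = ser_zero"
    and "inj_on \<tau> V" "Poly_Mapping.keys m1 \<subseteq> V"
    and "\<And>w. w \<in> V \<Longrightarrow> has_lowest_term UNIV (\<sigma> w) (Poly_Mapping.single (\<tau> w) 1) (c w)"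
  shows "subst \<sigma> H (rename_mon \<tau> m1) = (\<Sum>m\<in>mon_divisors m1. H m * mono_img \<sigma> m (rename_mon \<tau> m1))"
  unfolding subst_def
proof (rule sum.mono_neutral_left[OF finite_mon_divisors])
  show "{m. H m \<noteq> 0 \<and> mono_img \<sigma> m (rename_mon \<tau> m1) \<noteq> 0} \<subseteq> mon_divisors m1"
  proof clarify
    fix m
    assume H: "H m \<noteq> 0" and img: "mono_img \<sigma> m (rename_mon \<tau> m1) \<noteq> 0"
    have "Poly_Mapping.keys m \<subseteq> V"
    proof
      fix w
      assume w: "w \<in> Poly_Mapping.keys m"
      show "w \<in> V"
      proof (rule ccontr)
        assume "w \<notin> V"
        with w H assms(1,2) have "\<sigma> w = ser_zero"
          by blast
        with w have "mono_img \<sigma> m = ser_zero"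
          by (rule mono_img_eq_zero)
        with img show False
          by (simp add: ser_zero_def)
      qed
    qed
    with img show "m \<in> mon_divisors m1"
      using assms(3-5) by (intro mono_img_nonzero_imp_mon_divisor) auto
  qed
qed auto

lemma Phi_test_perm_separates:
  assumes "N < T" "only_vars (bounded_vars N) F" "only_vars (bounded_vars N) G"
    and "Poly_Mapping.keys m1 \<subseteq> test_vars T N" "F m1 \<noteq> G m1"
    and "\<And>m. m \<in> mon_divisors m1 \<Longrightarrow> m \<noteq> m1 \<Longrightarrow> F m = G m"
  shows "Phi (test_perm T N) F \<noteq> Phi (test_perm T N) G"
proof -
  let ?\<sigma> = "Phi_assign (test_perm T N)" and ?n = "rename_mon (test_target T) m1"
  obtain c where c: "\<And>w. w \<in> test_vars T N \<Longrightarrow> c w \<noteq> 0 \<and>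
      has_lowest_term UNIV (?\<sigma> w) (Poly_Mapping.single (test_target T w) 1) (c w)"
    using Phi_assign_test_perm_has_lowest_term[OF assms(1)] by metis
  have coeff: "Phi (test_perm T N) H ?n = (\<Sum>m\<in>mon_divisors m1. H m * mono_img ?\<sigma> m ?n)"
    if "only_vars (bounded_vars N) H" for H
    unfolding Phi_def
  proof (rule subst_coeff_eq_sum_mon_divisors)
    show "\<And>m. H m \<noteq> 0 \<Longrightarrow> Poly_Mapping.keys m \<subseteq> bounded_vars N"
      using that unfolding only_vars_def by blast
  qed (use assms(1,4) c Phi_assign_test_perm_eq_zero inj_on_test_target in auto)
  have "m1 \<in> mon_divisors m1"
    by (simp add: mon_divisors_iff_lookup_le)
  have "Phi (test_perm T N) F ?n - Phi (test_perm T N) G ?n =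
      (\<Sum>m\<in>mon_divisors m1. (F m - G m) * mono_img ?\<sigma> m ?n)"
    by (simp add: coeff assms(2,3) sum_subtractf[symmetric] left_diff_distrib)
  also have "\<dots> = (F m1 - G m1) * mono_img ?\<sigma> m1 ?n +
      (\<Sum>m\<in>mon_divisors m1 - {m1}. (F m - G m) * mono_img ?\<sigma> m ?n)"
    by (rule sum.remove[OF finite_mon_divisors \<open>m1 \<in> mon_divisors m1\<close>])
  also have "(\<Sum>m\<in>mon_divisors m1 - {m1}. (F m - G m) * mono_img ?\<sigma> m ?n) = 0"
    using assms(6) by (intro sum.neutral) simp
  also have "mono_img ?\<sigma> m1 ?n = (\<Prod>w\<in>Poly_Mapping.keys m1. c w ^ Poly_Mapping.lookup m1 w)"
    using mono_img_has_lowest_term[OF add_submonoid_UNIV, of m1 ?\<sigma> "test_target T" c] c assms(4)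
    unfolding has_lowest_term_def by blast
  finally have "Phi (test_perm T N) F ?n - Phi (test_perm T N) G ?n \<noteq> 0"
    using c assms(4,5) by auto
  then show ?thesis
    by auto
qed

lemma K_inf_minimal_difference:
  assumes "F \<in> K_inf" "G \<in> K_inf" "F \<noteq> G"
    and "only_vars (bounded_vars N) F" "only_vars (bounded_vars N) G"
  obtains T m1 where "N < T" "Poly_Mapping.keys m1 \<subseteq> test_vars T N" "F m1 \<noteq> G m1"
    "\<And>m. m \<in> mon_divisors m1 \<Longrightarrow> m \<noteq> m1 \<Longrightarrow> F m = G m"
proof -
  obtain k where "F k \<noteq> G k"
    using assms(3) by (meson ext)
  then obtain m0 where m0: "F m0 \<noteq> G m0" and min: "\<And>m. F m \<noteq> G m \<Longrightarrow> mdeg m0 \<le> mdeg m"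
    using ex_has_least_nat[of "\<lambda>m. F m \<noteq> G m" k mdeg] by blast
  have keys0: "Poly_Mapping.keys m0 \<subseteq> bounded_vars N"
    using m0 assms(4,5) unfolding only_vars_def by (cases "F m0 = 0") auto
  define T where "T = N + Max (insert 0 {i. X i \<in> Poly_Mapping.keys m0}) + 1"
  have "finite {i. X i \<in> Poly_Mapping.keys m0}"
    using finite_vimageI[OF finite_keys[of m0], of X] by (simp add: inj_def vimage_def)
  then have T: "N < T" "\<And>i. X i \<in> Poly_Mapping.keys m0 \<Longrightarrow> i \<le> T"
    unfolding T_def by (auto intro: le_SucI trans_le_add2 Max_ge)
  let ?\<phi> = "rename_mon (rename_x (swap_blocks T))"
  have invariant: "H (?\<phi> m) = H m" if "H \<in> K_inf" for H m
    using that swap_blocks_permutes swap_blocks_involution by (rule K_inf_coeff_rename_x)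
  show ?thesis
  proof (rule that)
    show "Poly_Mapping.keys (?\<phi> m0) \<subseteq> test_vars T N"
      using keys0 T(2) by (rule keys_rename_swap_blocks)
    show "F (?\<phi> m0) \<noteq> G (?\<phi> m0)"
      using m0 by (simp add: invariant[OF assms(1)] invariant[OF assms(2)])
    show "F m = G m" if "m \<in> mon_divisors (?\<phi> m0)" "m \<noteq> ?\<phi> m0" for m
      using mdeg_less_if_proper_divisor[OF that] min[of m] by (auto simp: mdeg_rename_mon)
  qed (fact T(1))
qed

theorem lemma8p6:
  shows "inj_on (\<lambda>F. restrict (\<lambda>v. Phi v F) W_inf) K_inf"
proof (rule inj_onI, rule ccontr)
  fix F G
  assume F: "F \<in> K_inf" and G: "G \<in> K_inf" and "F \<noteq> G"
    and eq: "restrict (\<lambda>v. Phi v F) W_inf = restrict (\<lambda>v. Phi v G) W_inf"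
  obtain N1 N2 where "only_vars (bounded_vars N1) F" "only_vars (bounded_vars N2) G"
    using K_inf_only_vars F G by metis
  then have bounded: "only_vars (bounded_vars (N1 + N2)) F" "only_vars (bounded_vars (N1 + N2)) G"
    by (meson bounded_vars_mono le_add1 le_add2 only_vars_mono)+
  obtain T m1 where "N1 + N2 < T" "Poly_Mapping.keys m1 \<subseteq> test_vars T (N1 + N2)" "F m1 \<noteq> G m1"
    "\<And>m. m \<in> mon_divisors m1 \<Longrightarrow> m \<noteq> m1 \<Longrightarrow> F m = G m"
    using K_inf_minimal_difference[OF F G \<open>F \<noteq> G\<close> bounded] by blast
  then have "Phi (test_perm T (N1 + N2)) F \<noteq> Phi (test_perm T (N1 + N2)) G"
    using bounded by (intro Phi_test_perm_separates)
  moreover have "test_perm T (N1 + N2) \<in> W_inf"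
    using \<open>N1 + N2 < T\<close> by (rule test_perm_in_W_inf)
  ultimately show False
    using eq by (metis restrict_apply')
qed

end
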